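(* Let $L$ be a real-valued Lévy process which is a special semimartingale with characteristic triplet $(b,0,F)$ with respect to $h(x)=x$, with $F(dx)=f(x)dx$, and let $0<Y<2$. (a) If $f_s(x)=O(|x|^{-(1+Y)})$ as $x\to0$, then there is $C\ge0$ with $0\le\Re(A^f(u))=A^{f_s}(u)\le C(1+|u|^Y)$ for all $u\in\mathds R$. (b) If $f_s(x)=\frac{C}{|x|^{1+Y}}+g(x)$ with $C>0$ and $g(x)=O(|x|^{-(1+Y-\delta)})$ as $x\to0$ for some $\delta>0$, then there exist $C_1>0$, $C_2\ge0$ and $Y'\in(0,Y)$ with $\Re(A^f(u))=A^{f_s}(u)\ge C_1|u|^Y-C_2(1+|u|^{Y'})$ for all $u\in\mathds R$. (c) If $f_{as}(x)=O(|x|^{-(1+Y)})$ as $x\to0$ and $Y\ne1$, then there are $C,C_1\ge0$ with $|\Im(A^f(u))|=|A^{f_{as}}(u)|\le C(1+|u|+|u|^Y)\le C_1(1+|u|^{\max(1,Y)})$ for all $u\in\mathds R$. (d) If $Y\in(0,1)$, $f_{as}(x)=O(|x|^{-(1+Y)})$ as $x\to0$, $\int|x|f(x)dx<\infty$, and $b=\int xF(dx)$, then there is $C\ge0$ with $|\Im(A(u))|\le C(1+|u|^Y)$ for all $u\in\mathds R$.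
   Context: $f_s(x)=\frac12(f(x)+f(-x))$ and $f_{as}(x)=\frac12(f(x)-f(-x))$. Define $A^{f_s}(u)=-\int(e^{-iux}-1+iux)f_s(x)dx=-\int(\cos(ux)-1)f_s(x)dx$, $A^{f_{as}}(u)=-\int(e^{-iux}-1+iux)f_{as}(x)dx=i\int(\sin(ux)-ux)f_{as}(x)dx$, and $A^f=A^{f_s}+A^{f_{as}}=-\int(e^{-iux}-1+iux)f(x)dx$. The symbol of $L$ is $A(u)=iub+A^f(u)$. $h(x)=O(k(x))$ as $x\to0$ means $|h|/|k|$ is bounded on some punctured neighbourhood of $0$. *)

theory Defs
  imports "HOL-Analysis.Analysis" "HOL-Library.Landau_Symbols"
begin

definition f_s :: "(real \<Rightarrow> real) \<Rightarrow> real \<Rightarrow> real" where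
  "f_s f x = (f x + f (- x)) / 2"

definition f_as :: "(real \<Rightarrow> real) \<Rightarrow> real \<Rightarrow> real" where
  "f_as f x = (f x - f (- x)) / 2"

definition A_dens :: "(real \<Rightarrow> real) \<Rightarrow> real \<Rightarrow> complex" where
  "A_dens f u = - (LINT x|lborel. (exp (- \<i> * complex_of_real (u * x)) - 1
                     + \<i> * complex_of_real (u * x)) * complex_of_real (f x))"

text \<open>Symbol of the Levy process with triplet (b,0,F(dx)=f(x)dx) w.r.t. h(x)=x.\<close>
definition levy_symbol :: "real \<Rightarrow> (real \<Rightarrow> real) \<Rightarrow> real \<Rightarrow> complex" where
  "levy_symbol b f u = \<i> * complex_of_real (u * b) + A_dens f u"

text \<open>f is the density of a Levy measure F(dx)=f(x)dx for which the Levy process is a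
  special semimartingale: F integrates min(x^2,|x|).\<close>
definition special_levy_density :: "(real \<Rightarrow> real) \<Rightarrow> bool" where
  "special_levy_density f \<longleftrightarrow> f \<in> borel_measurable borel \<and> (\<forall>x. 0 \<le> f x)
     \<and> integrable lborel (\<lambda>x. min (x\<^sup>2) \<bar>x\<bar> * f x)"

end

theory Submission
  imports Defs
begin

text \<open>
  The real part of \<open>A\<^sup>f(u)\<close> is \<open>\<integral>(1 - cos(ux)) f\<^sub>s(x) dx\<close> and its imaginary part is
  \<open>\<integral>(sin(ux) - ux) f\<^sub>a\<^sub>s(x) dx\<close>, because the two kernels are even and odd.
  Every estimate splits the integral at a small radius \<open>e\<close>. Away from the origin the kernels are
  \<open>O(min(x\<^sup>2, |x|))\<close>, which \<open>F\<close> integrates. Near the origin the density is at most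
  \<open>c |x| powr -(1+Y)\<close>, and the substitution \<open>y = ux\<close> turns \<open>\<integral>|k(ux)| |x| powr -(1+Y) dx\<close>
  into \<open>|u| powr Y \<integral>|k(y)| |y| powr -(1+Y) dy\<close>; the last integral is finite as soon as
  \<open>k(y) = O(|y| powr s)\<close> at \<open>0\<close> and \<open>O(|y| powr t)\<close> at infinity with \<open>t < Y < s\<close>
  (\<open>s = 2, t = 0\<close> for \<open>1 - cos\<close>, \<open>s = 2, t = 1\<close> for \<open>sin y - y\<close>, \<open>s = 1, t = 0\<close> for \<open>sin\<close>).
  For the lower bound the same substitution is applied to the leading term \<open>C |x| powr -(1+Y)\<close>,
  while the perturbation \<open>g\<close> only contributes \<open>|u| powr Y'\<close> with \<open>Y' < Y\<close>. For \<open>Y < 1\<close> the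
  function \<open>|x| f\<^sub>a\<^sub>s(x)\<close> is integrable near \<open>0\<close>; then \<open>|sin y - y| \<le> 2|y|\<close> bounds the imaginary
  part linearly in \<open>|u|\<close>, and in the symbol the drift \<open>b = \<integral>x F(dx)\<close> cancels the linear part
  of the kernel, leaving \<open>\<integral>sin(ux) f\<^sub>a\<^sub>s(x) dx\<close>.
\<close>

lemma one_minus_cos_le_half_sq: "1 - cos x \<le> x\<^sup>2 / 2" for x :: real
proof -
  have "1 - cos x = 2 * (sin (x/2))\<^sup>2"
    using cos_double_sin[of "x/2"] by simp
  also have "\<dots> \<le> 2 * (x/2)\<^sup>2"
    using abs_sin_x_le_abs_x[of "x/2"] by (simp only: abs_le_square_iff)
  finally show ?thesis by (simp add: power_divide)
qed

lemma one_minus_cos_le_2: "1 - cos x \<le> 2" for x :: real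
  using cos_ge_minus_one[of x] by linarith

lemma sq_div_4_le_one_minus_cos:
  fixes x :: real assumes "\<bar>x\<bar> \<le> 1" shows "x\<^sup>2 / 4 \<le> 1 - cos x"
proof -
  obtain t where t: "cos x = (\<Sum>m<4. cos_coeff m * x ^ m) + cos (t + 1/2 * real 4 * pi) / fact 4 * x ^ 4"
    using Maclaurin_cos_expansion by blast
  have sum: "(\<Sum>m<4. cos_coeff m * x ^ m) = 1 - x\<^sup>2 / 2"
    by (simp add: cos_coeff_def lessThan_nat_numeral power2_eq_square)
  have "1/2 * real 4 * pi = 2 * pi"
    by simp
  then have period: "cos (t + 1/2 * real 4 * pi) = cos t"
    by (simp add: cos_periodic)
  have fact: "fact 4 = (24 :: real)"
    by (simp add: fact_numeral)
  have "\<bar>x\<bar> ^ 4 \<le> \<bar>x\<bar> ^ 2"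
    by (rule power_decreasing) (use assms in auto)
  then have "x ^ 4 \<le> x\<^sup>2"
    by simp
  moreover have "cos t * x ^ 4 \<le> x ^ 4"
    using mult_right_mono[OF cos_le_one[of t], of "x ^ 4"] by simp
  moreover have "cos x = 1 - x\<^sup>2 / 2 + cos t * x ^ 4 / 24"
    using t unfolding sum period fact by simp
  ultimately show ?thesis
    using zero_le_power2[of x] by linarith
qed

lemma abs_one_minus_cos_le_powr:
  fixes y :: real
  shows "\<bar>y\<bar> \<le> 1 \<Longrightarrow> \<bar>1 - cos y\<bar> \<le> 2 * \<bar>y\<bar> powr 2"
    and "1 \<le> \<bar>y\<bar> \<Longrightarrow> \<bar>1 - cos y\<bar> \<le> 2 * \<bar>y\<bar> powr 0"
proof -
  have "\<bar>1 - cos y\<bar> = 1 - cos y" "\<bar>y\<bar> powr 2 = y\<^sup>2"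
    by simp_all
  then show "\<bar>1 - cos y\<bar> \<le> 2 * \<bar>y\<bar> powr 2"
    using one_minus_cos_le_half_sq[of y] zero_le_power2[of y] by linarith
  show "1 \<le> \<bar>y\<bar> \<Longrightarrow> \<bar>1 - cos y\<bar> \<le> 2 * \<bar>y\<bar> powr 0"
    using one_minus_cos_le_2[of y] by simp
qed

lemma indicator_powr_le_one_minus_cos:
  fixes y Y :: real
  shows "indicator {-1..1} y * \<bar>y\<bar> powr (1 - Y) / 4 \<le> (1 - cos y) * \<bar>y\<bar> powr - (1 + Y)"
proof (cases "y \<noteq> 0 \<and> \<bar>y\<bar> \<le> 1")
  case True
  have "y\<^sup>2 * \<bar>y\<bar> powr - (1 + Y) = \<bar>y\<bar> powr 2 * \<bar>y\<bar> powr - (1 + Y)"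
    by simp
  also have "\<dots> = \<bar>y\<bar> powr (1 - Y)"
    unfolding powr_add[symmetric] by simp
  finally have "indicator {-1..1} y * \<bar>y\<bar> powr (1 - Y) / 4 = y\<^sup>2 / 4 * \<bar>y\<bar> powr - (1 + Y)"
    using True by (simp add: indicator_def abs_le_iff)
  also have "\<dots> \<le> (1 - cos y) * \<bar>y\<bar> powr - (1 + Y)"
    using True by (intro mult_right_mono sq_div_4_le_one_minus_cos) auto
  finally show ?thesis .
next
  case False
  then show ?thesis
    by (auto simp: indicator_def)
qed

lemma min_sq_abs_eq_sq: "\<bar>x\<bar> \<le> 1 \<Longrightarrow> min (x\<^sup>2) \<bar>x\<bar> = x\<^sup>2" for x :: real
  using mult_right_mono[of "\<bar>x\<bar>" 1 "\<bar>x\<bar>"] by (simp add: power2_eq_square min_def)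

lemma min_sq_abs_eq_abs: "1 \<le> \<bar>x\<bar> \<Longrightarrow> min (x\<^sup>2) \<bar>x\<bar> = \<bar>x\<bar>" for x :: real
  using mult_right_mono[of 1 "\<bar>x\<bar>" "\<bar>x\<bar>"] by (simp add: power2_eq_square min_def)

lemma abs_sin_minus_le_min_sq_abs: "\<bar>sin x - x\<bar> \<le> 2 * min (x\<^sup>2) \<bar>x\<bar>" for x :: real
proof (cases "\<bar>x\<bar> \<le> 1")
  case True
  have sum: "(\<Sum>m<3. sin_coeff m * x ^ m) = x"
    by (simp add: lessThan_nat_numeral sin_coeff_def)
  have fact: "inverse (fact 3) = (1/6::real)"
    by (simp add: fact_numeral)
  have "\<bar>sin x - x\<bar> \<le> \<bar>x\<bar> ^ 3 / 6"
    using Maclaurin_sin_bound[of x 3] unfolding sum fact by simp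
  moreover have "\<bar>x\<bar> ^ 3 \<le> x\<^sup>2"
    using True power_decreasing[of 2 3 "\<bar>x\<bar>"] by simp
  ultimately show ?thesis
    using min_sq_abs_eq_sq[OF True] zero_le_power2[of x] by linarith
next
  case False
  then show ?thesis
    using abs_sin_x_le_abs_x[of x] min_sq_abs_eq_abs[of x] by simp
qed

lemma abs_sin_minus_dilated_le:
  fixes u x h :: real
  shows "\<bar>(sin (u * x) - u * x) * h\<bar> \<le> 2 * \<bar>u\<bar> * (\<bar>x\<bar> * \<bar>h\<bar>)"
proof -
  have "\<bar>sin (u * x) - u * x\<bar> \<le> 2 * (\<bar>u\<bar> * \<bar>x\<bar>)"
    using abs_sin_minus_le_min_sq_abs[of "u * x"] by (simp add: abs_mult)
  then have "\<bar>sin (u * x) - u * x\<bar> * \<bar>h\<bar> \<le> 2 * (\<bar>u\<bar> * \<bar>x\<bar>) * \<bar>h\<bar>"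
    by (rule mult_right_mono) simp
  then show ?thesis
    by (simp add: abs_mult mult_ac)
qed

lemma one_minus_cos_le_min_sq_abs: "1 - cos x \<le> 2 * min (x\<^sup>2) \<bar>x\<bar>" for x :: real
proof (cases "\<bar>x\<bar> \<le> 1")
  case True
  then show ?thesis
    using one_minus_cos_le_half_sq[of x] min_sq_abs_eq_sq[OF True] zero_le_power2[of x] by linarith
next
  case False
  then show ?thesis
    using one_minus_cos_le_2[of x] min_sq_abs_eq_abs[of x] by linarith
qed

lemma min_sq_abs_dilation_le:
  "min ((u * x)\<^sup>2) \<bar>u * x\<bar> \<le> (u\<^sup>2 + \<bar>u\<bar>) * min (x\<^sup>2) \<bar>x\<bar>" for u x :: real
proof (cases "\<bar>x\<bar> \<le> 1")
  case True
  have "min ((u * x)\<^sup>2) \<bar>u * x\<bar> \<le> u\<^sup>2 * x\<^sup>2"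
    by (simp add: power_mult_distrib)
  also have "\<dots> \<le> (u\<^sup>2 + \<bar>u\<bar>) * x\<^sup>2"
    by (intro mult_right_mono) auto
  finally show ?thesis
    using min_sq_abs_eq_sq[OF True] by simp
next
  case False
  have "min ((u * x)\<^sup>2) \<bar>u * x\<bar> \<le> \<bar>u\<bar> * \<bar>x\<bar>"
    by (simp add: abs_mult)
  also have "\<dots> \<le> (u\<^sup>2 + \<bar>u\<bar>) * \<bar>x\<bar>"
    by (intro mult_right_mono) auto
  finally show ?thesis
    using False min_sq_abs_eq_abs[of x] by simp
qed

lemma mult_abs_le_min_sq_abs:
  fixes e x :: real
  assumes "0 \<le> e" "e \<le> 1" "e \<le> \<bar>x\<bar>"
  shows "e * \<bar>x\<bar> \<le> min (x\<^sup>2) \<bar>x\<bar>"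
  using mult_right_mono[OF assms(3) abs_ge_zero[of x]] mult_right_mono[OF assms(2) abs_ge_zero[of x]]
  by (simp add: power2_eq_square)

lemma abs_one_minus_cos_mult_le_far:
  fixes u x e v :: real
  assumes "e \<le> \<bar>x\<bar>" "0 < e" "e \<le> 1" "0 \<le> v"
  shows "\<bar>(1 - cos (u * x)) * v\<bar> \<le> 2 / e\<^sup>2 * (min (x\<^sup>2) \<bar>x\<bar> * v)"
proof -
  have "e\<^sup>2 \<le> e * \<bar>x\<bar>"
    using mult_left_mono[OF assms(1), of e] assms(2) by (simp add: power2_eq_square)
  also have "\<dots> \<le> min (x\<^sup>2) \<bar>x\<bar>"
    using mult_abs_le_min_sq_abs[of e x] assms(1-3) by simp
  finally have "e\<^sup>2 * (2 * v) \<le> min (x\<^sup>2) \<bar>x\<bar> * (2 * v)"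
    by (rule mult_right_mono) (use assms(4) in simp)
  then have "2 * v \<le> 2 / e\<^sup>2 * (min (x\<^sup>2) \<bar>x\<bar> * v)"
    using assms(2) by (simp add: field_simps)
  moreover have "\<bar>(1 - cos (u * x)) * v\<bar> \<le> 2 * v"
    using assms(4) one_minus_cos_le_2[of "u * x"] by (simp add: abs_mult mult_right_mono)
  ultimately show ?thesis
    by linarith
qed

lemma abs_sin_minus_mult_le_far:
  fixes u x e h :: real
  assumes "e \<le> \<bar>x\<bar>" "0 < e" "e \<le> 1"
  shows "\<bar>(sin (u * x) - u * x) * h\<bar> \<le> 2 * \<bar>u\<bar> / e * \<bar>min (x\<^sup>2) \<bar>x\<bar> * h\<bar>"
proof -
  have "e * (\<bar>x\<bar> * \<bar>h\<bar>) \<le> \<bar>min (x\<^sup>2) \<bar>x\<bar> * h\<bar>"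
    using mult_right_mono[OF mult_abs_le_min_sq_abs[of e x] abs_ge_zero[of h]] assms
    by (simp add: abs_mult mult_ac)
  then have "2 * \<bar>u\<bar> / e * (e * (\<bar>x\<bar> * \<bar>h\<bar>)) \<le> 2 * \<bar>u\<bar> / e * \<bar>min (x\<^sup>2) \<bar>x\<bar> * h\<bar>"
    by (rule mult_left_mono) (use assms(2) in simp)
  then show ?thesis
    using abs_sin_minus_dilated_le[of u x h] assms(2) by simp
qed

lemma abs_sin_mult_le_far:
  fixes u x e h :: real
  assumes "e \<le> \<bar>x\<bar>" "0 < e"
  shows "\<bar>sin (u * x) * h\<bar> \<le> 1 / e * (\<bar>x\<bar> * \<bar>h\<bar>)"
proof -
  have "\<bar>sin (u * x) * h\<bar> \<le> 1 * \<bar>h\<bar>"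
    unfolding abs_mult by (rule mult_right_mono) simp_all
  also have "\<dots> \<le> \<bar>x\<bar> / e * \<bar>h\<bar>"
    using assms by (intro mult_right_mono) simp_all
  finally show ?thesis
    by simp
qed

lemma add_le_sum_mult_one_plus:
  fixes a b t :: real
  assumes "0 \<le> a" "0 \<le> b" "0 \<le> t"
  shows "a * t + b \<le> (a + b) * (1 + t)"
  using assms by (simp add: algebra_simps)

lemma add_le_sum_mult_one_plus_plus:
  fixes a b s t :: real
  assumes "0 \<le> a" "0 \<le> b" "0 \<le> s" "0 \<le> t"
  shows "a * t + b * s \<le> (a + b) * (1 + s + t)"
proof -
  have "(a + b) * (1 + s + t) = a * t + b * s + (a + a * s + b + b * t)"
    by (simp add: algebra_simps)
  moreover have "0 \<le> a + a * s + b + b * t"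
    using assms by (intro add_nonneg_nonneg mult_nonneg_nonneg)
  ultimately show ?thesis
    by linarith
qed

lemma one_plus_plus_powr_le_powr_max:
  fixes t Y :: real
  assumes "0 \<le> t" "0 < Y"
  shows "1 + t + t powr Y \<le> 3 * (1 + t powr max 1 Y)"
proof (cases "t \<le> 1")
  case True
  then have "t powr Y \<le> 1"
    using assms powr_mono2[of Y t 1] by simp
  moreover have "3 * (1 + t powr max 1 Y) = 3 + 3 * t powr max 1 Y"
    by simp
  ultimately show ?thesis
    using True powr_ge_zero[of t "max 1 Y"] by linarith
next
  case False
  then have "t \<le> t powr max 1 Y" "t powr Y \<le> t powr max 1 Y"
    using powr_mono[of 1 "max 1 Y" t] powr_mono[of Y "max 1 Y" t] by auto
  moreover have "3 * (1 + t powr max 1 Y) = 3 + 3 * t powr max 1 Y"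
    by simp
  ultimately show ?thesis
    using False by linarith
qed

lemma integral_lborel_reflect:
  fixes \<phi> g :: "real \<Rightarrow> real"
  shows "(LINT x|lborel. \<phi> x * g (- x)) = (LINT x|lborel. \<phi> (- x) * g x)"
  using lborel_integral_real_affine[of "-1" "\<lambda>x. \<phi> (- x) * g x" 0] by simp

lemma integrable_lborel_reflect:
  fixes h :: "real \<Rightarrow> real"
  assumes "integrable lborel h"
  shows "integrable lborel (\<lambda>x. h (- x))"
  using lborel_integrable_real_affine[OF assms, of "-1" 0] by simp

lemma has_integral_nonneg_lborel:
  fixes f :: "real \<Rightarrow> real"
  assumes [measurable]: "f \<in> borel_measurable borel" and nonneg: "\<And>x. 0 \<le> f x"
    and has_int: "(f has_integral I) UNIV"
  shows "integrable lborel f" and "integral\<^sup>L lborel f = I"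
proof -
  have "0 \<le> I"
    using has_integral_nonneg[OF has_int] nonneg by auto
  moreover have "integral\<^sup>N lborel f = ennreal I"
    using nn_integral_has_integral_lborel[OF _ _ has_int] nonneg by auto
  ultimately have "has_bochner_integral lborel f I"
    using nonneg by (intro has_bochner_integral_nn_integral) auto
  then show "integrable lborel f" "integral\<^sup>L lborel f = I"
    by (simp_all add: has_bochner_integral_iff)
qed

lemma integral_even_extension:
  fixes g :: "real \<Rightarrow> real"
  assumes "integrable lborel g"
  shows "integrable lborel (\<lambda>y. g y + g (- y))" "(LINT y|lborel. g y + g (- y)) = 2 * integral\<^sup>L lborel g"
proof -
  have "(LINT y|lborel. g (- y)) = integral\<^sup>L lborel g"
    using lborel_integral_real_affine[of "-1" g 0] by simp
  then show "integrable lborel (\<lambda>y. g y + g (- y))" "(LINT y|lborel. g y + g (- y)) = 2 * integral\<^sup>L lborel g"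
    using assms integrable_lborel_reflect[OF assms] by simp_all
qed

lemma
  fixes p :: real
  assumes "-1 < p"
  shows integrable_abs_powr_unit: "integrable lborel (\<lambda>y. indicator {-1..1} y * \<bar>y\<bar> powr p)"
    and integral_abs_powr_unit: "(LINT y|lborel. indicator {-1..1} y * \<bar>y\<bar> powr p) = 2 / (p + 1)"
proof -
  let ?g = "\<lambda>y::real. indicator {0..1} y * y powr p"
  have "((\<lambda>y. y powr p) has_integral (1 / (p + 1))) {0..1}"
    using has_integral_powr_from_0[OF assms, of 1] by simp
  then have "((\<lambda>y. if y \<in> {0..1} then y powr p else 0) has_integral (1 / (p + 1))) UNIV"
    unfolding has_integral_restrict_UNIV .
  then have "(?g has_integral (1 / (p + 1))) UNIV"
    by (rule has_integral_eq[rotated]) (simp add: indicator_def)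
  then have g: "integrable lborel ?g" "integral\<^sup>L lborel ?g = 1 / (p + 1)"
    using has_integral_nonneg_lborel[of ?g] by simp_all
  have "indicator {-1..1} y * \<bar>y\<bar> powr p = ?g y + ?g (- y)" for y :: real
    by (cases "y > 0"; cases "y < 0") (auto simp: indicator_def)
  then show "integrable lborel (\<lambda>y. indicator {-1..1} y * \<bar>y\<bar> powr p)"
    "(LINT y|lborel. indicator {-1..1} y * \<bar>y\<bar> powr p) = 2 / (p + 1)"
    using integral_even_extension[OF g(1)] g(2) by simp_all
qed

lemma integrable_abs_powr_tail:
  fixes q :: real
  assumes "q < -1"
  shows "integrable lborel (\<lambda>y. indicator {y. 1 \<le> \<bar>y\<bar>} y * \<bar>y\<bar> powr q)"
proof -
  let ?g = "\<lambda>y::real. indicator {1..} y * y powr q"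
  have "((\<lambda>y. y powr q) has_integral (- 1 / (q + 1))) {1..}"
    using has_integral_powr_to_inf[OF assms, of 1] by simp
  then have "((\<lambda>y. if y \<in> {1..} then y powr q else 0) has_integral (- 1 / (q + 1))) UNIV"
    unfolding has_integral_restrict_UNIV .
  then have "(?g has_integral (- 1 / (q + 1))) UNIV"
    by (rule has_integral_eq[rotated]) (simp add: indicator_def)
  then have g: "integrable lborel ?g"
    using has_integral_nonneg_lborel(1)[of ?g] by simp
  have "indicator {y. 1 \<le> \<bar>y\<bar>} y * \<bar>y\<bar> powr q = ?g y + ?g (- y)" for y :: real
    by (cases "y > 0"; cases "y < 0") (auto simp: indicator_def)
  then show ?thesis
    using integral_even_extension(1)[OF g] by simp
qed

definition split_powr :: "real \<Rightarrow> real \<Rightarrow> real \<Rightarrow> real" where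
  "split_powr p q y = (if \<bar>y\<bar> \<le> 1 then \<bar>y\<bar> powr p else \<bar>y\<bar> powr q)"

lemma split_powr_nonneg: "0 \<le> split_powr p q y"
  by (simp add: split_powr_def)

lemma split_powr_measurable [measurable]: "split_powr p q \<in> borel_measurable borel"
  unfolding split_powr_def[abs_def] by measurable

lemma integrable_split_powr:
  assumes "-1 < p" "q < -1"
  shows "integrable lborel (split_powr p q)"
proof (rule Bochner_Integration.integrable_bound)
  show "integrable lborel (\<lambda>y. indicator {-1..1} y * \<bar>y\<bar> powr p + indicator {y. 1 \<le> \<bar>y\<bar>} y * \<bar>y\<bar> powr q)"
    using integrable_abs_powr_unit[OF assms(1)] integrable_abs_powr_tail[OF assms(2)] by simp
  show "AE y in lborel. norm (split_powr p q y)
          \<le> norm (indicator {-1..1} y * \<bar>y\<bar> powr p + indicator {y. 1 \<le> \<bar>y\<bar>} y * \<bar>y\<bar> powr q)"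
    by (rule AE_I2) (auto simp: split_powr_def indicator_def abs_le_iff)
qed simp

lemma
  fixes P :: "real \<Rightarrow> real"
  assumes "integrable lborel P" "u \<noteq> 0"
  shows integrable_dilation: "integrable lborel (\<lambda>x. P (u * x))"
    and integral_dilation: "(LINT x|lborel. P (u * x)) = integral\<^sup>L lborel P / \<bar>u\<bar>"
  using lborel_integrable_real_affine[OF assms(1), of u 0] lborel_integral_real_affine[OF assms(2), of P 0] assms(2)
  by simp_all

lemma integral_dilation_powr:
  fixes P :: "real \<Rightarrow> real"
  assumes "integrable lborel P" "u \<noteq> 0"
  shows "(LINT x|lborel. c * \<bar>u\<bar> powr (1 + p) * P (u * x)) = c * integral\<^sup>L lborel P * \<bar>u\<bar> powr p"
proof -
  have "(LINT x|lborel. c * \<bar>u\<bar> powr (1 + p) * P (u * x)) = c * \<bar>u\<bar> powr (1 + p) * (integral\<^sup>L lborel P / \<bar>u\<bar>)"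
    by (simp only: integral_mult_right_zero integral_dilation[OF assms])
  moreover have "\<bar>u\<bar> powr (1 + p) = \<bar>u\<bar> * \<bar>u\<bar> powr p"
    using assms(2) by (simp add: powr_add)
  ultimately show ?thesis
    using assms(2) by simp
qed

lemma bigo_at_0_powrE:
  fixes g :: "real \<Rightarrow> real"
  assumes "g \<in> O[at 0](\<lambda>x. \<bar>x\<bar> powr p)"
  obtains c e where "0 < c" "0 < e" "e \<le> 1" "\<And>x. x \<noteq> 0 \<Longrightarrow> \<bar>x\<bar> < e \<Longrightarrow> \<bar>g x\<bar> \<le> c * \<bar>x\<bar> powr p"
proof -
  obtain c where "0 < c" and "eventually (\<lambda>x. norm (g x) \<le> c * norm (\<bar>x\<bar> powr p)) (at 0)"
    using assms by (elim landau_o.bigE)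
  then obtain d where "0 < d" and "\<And>x. x \<noteq> 0 \<Longrightarrow> dist x 0 < d \<Longrightarrow> norm (g x) \<le> c * norm (\<bar>x\<bar> powr p)"
    unfolding eventually_at by auto
  with \<open>0 < c\<close> show ?thesis
    by (intro that[of c "min d 1"]) auto
qed

lemma abs_powr_dilation:
  fixes u x q :: real
  assumes "u \<noteq> 0"
  shows "\<bar>x\<bar> powr q = \<bar>u\<bar> powr (- q) * \<bar>u * x\<bar> powr q"
  using assms by (simp add: abs_mult powr_mult powr_minus)

lemma kernel_powr_le_split_powr:
  fixes k :: "real \<Rightarrow> real"
  assumes small: "\<And>y. \<bar>y\<bar> \<le> 1 \<Longrightarrow> \<bar>k y\<bar> \<le> K * \<bar>y\<bar> powr s"
    and large: "\<And>y. 1 \<le> \<bar>y\<bar> \<Longrightarrow> \<bar>k y\<bar> \<le> K * \<bar>y\<bar> powr t"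
  shows "\<bar>k y\<bar> * \<bar>y\<bar> powr - (1 + p) \<le> K * split_powr (s - (1 + p)) (t - (1 + p)) y"
proof (cases "y = 0")
  case True
  then show ?thesis by (simp add: split_powr_def)
next
  case False
  then have powr: "\<bar>y\<bar> powr a * \<bar>y\<bar> powr - (1 + p) = \<bar>y\<bar> powr (a - (1 + p))" for a
    by (metis powr_add diff_conv_add_uminus)
  show ?thesis
  proof (cases "\<bar>y\<bar> \<le> 1")
    case True
    have "\<bar>k y\<bar> * \<bar>y\<bar> powr - (1 + p) \<le> K * \<bar>y\<bar> powr s * \<bar>y\<bar> powr - (1 + p)"
      by (rule mult_right_mono[OF small[OF True]]) simp
    with True show ?thesis
      using powr[of s] by (simp add: split_powr_def mult.assoc)
  next
    case False
    have "\<bar>k y\<bar> * \<bar>y\<bar> powr - (1 + p) \<le> K * \<bar>y\<bar> powr t * \<bar>y\<bar> powr - (1 + p)"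
      by (rule mult_right_mono[OF large]) (use False in auto)
    with False show ?thesis
      using powr[of t] by (simp add: split_powr_def mult.assoc)
  qed
qed

lemma dilated_kernel_le_split_powr:
  fixes k :: "real \<Rightarrow> real"
  assumes small: "\<And>y. \<bar>y\<bar> \<le> 1 \<Longrightarrow> \<bar>k y\<bar> \<le> K * \<bar>y\<bar> powr s"
    and large: "\<And>y. 1 \<le> \<bar>y\<bar> \<Longrightarrow> \<bar>k y\<bar> \<le> K * \<bar>y\<bar> powr t"
    and "u \<noteq> 0"
  shows "\<bar>k (u * x)\<bar> * \<bar>x\<bar> powr - (1 + p)
           \<le> K * \<bar>u\<bar> powr (1 + p) * split_powr (s - (1 + p)) (t - (1 + p)) (u * x)"
proof -
  have "\<bar>k (u * x)\<bar> * \<bar>x\<bar> powr - (1 + p) = \<bar>u\<bar> powr (1 + p) * (\<bar>k (u * x)\<bar> * \<bar>u * x\<bar> powr - (1 + p))"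
    using abs_powr_dilation[OF \<open>u \<noteq> 0\<close>, of x "- (1 + p)"] by (simp add: add.commute)
  also have "\<dots> \<le> \<bar>u\<bar> powr (1 + p) * (K * split_powr (s - (1 + p)) (t - (1 + p)) (u * x))"
    by (intro mult_left_mono kernel_powr_le_split_powr small large) auto
  finally show ?thesis
    by (simp add: mult_ac)
qed

lemma abs_dilated_kernel_mult_le:
  fixes k g w :: "real \<Rightarrow> real"
  assumes small: "\<And>y. \<bar>y\<bar> \<le> 1 \<Longrightarrow> \<bar>k y\<bar> \<le> K * \<bar>y\<bar> powr s"
    and large: "\<And>y. 1 \<le> \<bar>y\<bar> \<Longrightarrow> \<bar>k y\<bar> \<le> K * \<bar>y\<bar> powr t"
    and near: "x \<noteq> 0 \<Longrightarrow> \<bar>x\<bar> < e \<Longrightarrow> \<bar>g x\<bar> \<le> c * \<bar>x\<bar> powr - (1 + p)" and "0 \<le> c"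
    and far: "e \<le> \<bar>x\<bar> \<Longrightarrow> \<bar>k (u * x) * g x\<bar> \<le> w x" and "0 \<le> w x"
    and "u \<noteq> 0"
  shows "\<bar>k (u * x) * g x\<bar> \<le> c * K * \<bar>u\<bar> powr (1 + p) * split_powr (s - (1 + p)) (t - (1 + p)) (u * x) + w x"
proof -
  have "0 \<le> K"
    using small[of 1] by simp
  then have dilated_nonneg: "0 \<le> c * K * \<bar>u\<bar> powr (1 + p) * split_powr (s - (1 + p)) (t - (1 + p)) (u * x)"
    using \<open>0 \<le> c\<close> split_powr_nonneg by simp
  consider "x = 0" | "x \<noteq> 0" "\<bar>x\<bar> < e" | "e \<le> \<bar>x\<bar>"
    by linarith
  then show ?thesis
  proof cases
    case 1
    \<comment> \<open>\<open>0 powr s = 0\<close>, so the bound near the origin forces \<open>k 0 = 0\<close>.\<close>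
    then have "k (u * x) = 0"
      using small[of 0] by simp
    then show ?thesis
      using dilated_nonneg \<open>0 \<le> w x\<close> by simp
  next
    case 2
    have "\<bar>k (u * x) * g x\<bar> \<le> \<bar>k (u * x)\<bar> * (c * \<bar>x\<bar> powr - (1 + p))"
      unfolding abs_mult by (rule mult_left_mono[OF near[OF 2]]) simp
    also have "\<dots> = c * (\<bar>k (u * x)\<bar> * \<bar>x\<bar> powr - (1 + p))"
      by (simp add: mult_ac)
    also have "\<dots> \<le> c * (K * \<bar>u\<bar> powr (1 + p) * split_powr (s - (1 + p)) (t - (1 + p)) (u * x))"
      using \<open>0 \<le> c\<close> \<open>u \<noteq> 0\<close> by (intro mult_left_mono dilated_kernel_le_split_powr small large)
    finally show ?thesis
      using \<open>0 \<le> w x\<close> by (simp add: mult_ac)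
  next
    case 3
    then show ?thesis
      using far dilated_nonneg by linarith
  qed
qed

lemma abs_integral_dilated_kernel_le:
  fixes k g w :: "real \<Rightarrow> real"
  assumes int: "integrable lborel (\<lambda>x. k (u * x) * g x)"
    and small: "\<And>y. \<bar>y\<bar> \<le> 1 \<Longrightarrow> \<bar>k y\<bar> \<le> K * \<bar>y\<bar> powr s"
    and large: "\<And>y. 1 \<le> \<bar>y\<bar> \<Longrightarrow> \<bar>k y\<bar> \<le> K * \<bar>y\<bar> powr t"
    and exponents: "t < p" "p < s"
    and near: "\<And>x. x \<noteq> 0 \<Longrightarrow> \<bar>x\<bar> < e \<Longrightarrow> \<bar>g x\<bar> \<le> c * \<bar>x\<bar> powr - (1 + p)" and "0 \<le> c"
    and far: "\<And>x. e \<le> \<bar>x\<bar> \<Longrightarrow> \<bar>k (u * x) * g x\<bar> \<le> w x"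
    and w: "integrable lborel w" "\<And>x. 0 \<le> w x"
  shows "\<bar>LINT x|lborel. k (u * x) * g x\<bar>
           \<le> c * K * (LINT y|lborel. split_powr (s - (1 + p)) (t - (1 + p)) y) * \<bar>u\<bar> powr p
             + integral\<^sup>L lborel w"
proof (cases "u = 0")
  case True
  have "k 0 = 0" "0 \<le> K"
    using small[of 0] small[of 1] by simp_all
  then show ?thesis
    using True \<open>0 \<le> c\<close> w(2) by (simp add: Bochner_Integration.integral_nonneg)
next
  case u: False
  let ?S = "split_powr (s - (1 + p)) (t - (1 + p))"
  have S: "integrable lborel ?S"
    using exponents by (intro integrable_split_powr) auto
  have R: "integrable lborel (\<lambda>x. c * K * \<bar>u\<bar> powr (1 + p) * ?S (u * x))"
    by (rule integrable_mult_right[OF integrable_dilation[OF S u]])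
  have "\<bar>LINT x|lborel. k (u * x) * g x\<bar> \<le> (LINT x|lborel. c * K * \<bar>u\<bar> powr (1 + p) * ?S (u * x) + w x)"
    using small large near \<open>0 \<le> c\<close> far w(2) u
    by (intro integral_abs_bound_integral int Bochner_Integration.integrable_add R w(1) abs_dilated_kernel_mult_le)
  also have "\<dots> = c * K * integral\<^sup>L lborel ?S * \<bar>u\<bar> powr p + integral\<^sup>L lborel w"
    by (simp only: Bochner_Integration.integral_add[OF R w(1)] integral_dilation_powr[OF S u])
  finally show ?thesis .
qed

lemma perturbed_powr_lower_bound:
  fixes h g :: "real \<Rightarrow> real"
  assumes "x \<noteq> 0" "\<bar>x\<bar> < e" "e \<le> 1" "Y - \<delta> \<le> a" "0 \<le> K"
    and decomposition: "h x = C0 / \<bar>x\<bar> powr (1 + Y) + g x"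
    and g: "\<bar>g x\<bar> \<le> K * \<bar>x\<bar> powr - (1 + Y - \<delta>)"
  shows "C0 * \<bar>x\<bar> powr - (1 + Y) - K * \<bar>x\<bar> powr - (1 + a) \<le> h x"
proof -
  have "\<bar>x\<bar> powr - (1 + Y - \<delta>) \<le> \<bar>x\<bar> powr - (1 + a)"
    using assms(1-4) by (intro powr_mono') auto
  then have "\<bar>g x\<bar> \<le> K * \<bar>x\<bar> powr - (1 + a)"
    using g mult_left_mono[OF _ \<open>0 \<le> K\<close>] by (meson order.trans)
  moreover have "C0 / \<bar>x\<bar> powr (1 + Y) = C0 * \<bar>x\<bar> powr - (1 + Y)"
    by (simp only: powr_minus divide_inverse)
  ultimately show ?thesis
    using decomposition by linarith
qed

lemma dilated_one_minus_cos_lower_bound: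
  fixes h :: "real \<Rightarrow> real"
  assumes large: "1 < \<bar>u\<bar> * e" and "0 < e" "0 \<le> C0" "0 \<le> K"
    and nonneg: "0 \<le> h x"
    and near: "x \<noteq> 0 \<Longrightarrow> \<bar>x\<bar> < e \<Longrightarrow> C0 * \<bar>x\<bar> powr - (1 + Y) - K * \<bar>x\<bar> powr - (1 + a) \<le> h x"
  shows "C0 * \<bar>u\<bar> powr (1 + Y) * (indicator {-1..1} (u * x) * \<bar>u * x\<bar> powr (1 - Y) / 4)
           - 2 * K * \<bar>u\<bar> powr (1 + a) * split_powr (2 - (1 + a)) (0 - (1 + a)) (u * x)
         \<le> (1 - cos (u * x)) * h x"
proof -
  have u: "u \<noteq> 0"
    using large by auto
  have tail_nonneg: "0 \<le> 2 * K * \<bar>u\<bar> powr (1 + a) * split_powr (2 - (1 + a)) (0 - (1 + a)) (u * x)"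
    using \<open>0 \<le> K\<close> split_powr_nonneg by simp
  consider "x = 0" | "x \<noteq> 0" "\<bar>x\<bar> < e" | "e \<le> \<bar>x\<bar>"
    by linarith
  then show ?thesis
  proof cases
    case 1
    then show ?thesis
      by (simp add: split_powr_def)
  next
    case 2
    have "C0 * \<bar>u\<bar> powr (1 + Y) * (indicator {-1..1} (u * x) * \<bar>u * x\<bar> powr (1 - Y) / 4)
        \<le> C0 * \<bar>u\<bar> powr (1 + Y) * ((1 - cos (u * x)) * \<bar>u * x\<bar> powr - (1 + Y))"
      using \<open>0 \<le> C0\<close> by (intro mult_left_mono indicator_powr_le_one_minus_cos) auto
    also have "\<dots> = (1 - cos (u * x)) * (C0 * \<bar>x\<bar> powr - (1 + Y))"
      using abs_powr_dilation[OF u, of x "- (1 + Y)"] by (simp add: add.commute)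
    finally have main: "C0 * \<bar>u\<bar> powr (1 + Y) * (indicator {-1..1} (u * x) * \<bar>u * x\<bar> powr (1 - Y) / 4)
        \<le> (1 - cos (u * x)) * (C0 * \<bar>x\<bar> powr - (1 + Y))" .
    have "\<bar>1 - cos (u * x)\<bar> * \<bar>x\<bar> powr - (1 + a)
        \<le> 2 * \<bar>u\<bar> powr (1 + a) * split_powr (2 - (1 + a)) (0 - (1 + a)) (u * x)"
      using u by (intro dilated_kernel_le_split_powr abs_one_minus_cos_le_powr)
    then have "K * (\<bar>1 - cos (u * x)\<bar> * \<bar>x\<bar> powr - (1 + a))
        \<le> K * (2 * \<bar>u\<bar> powr (1 + a) * split_powr (2 - (1 + a)) (0 - (1 + a)) (u * x))"
      by (rule mult_left_mono) (use \<open>0 \<le> K\<close> in simp)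
    then have error: "(1 - cos (u * x)) * (K * \<bar>x\<bar> powr - (1 + a))
        \<le> 2 * K * \<bar>u\<bar> powr (1 + a) * split_powr (2 - (1 + a)) (0 - (1 + a)) (u * x)"
      by (simp add: mult_ac)
    have "(1 - cos (u * x)) * (C0 * \<bar>x\<bar> powr - (1 + Y) - K * \<bar>x\<bar> powr - (1 + a))
        \<le> (1 - cos (u * x)) * h x"
      using near[OF 2] by (intro mult_left_mono) auto
    then show ?thesis
      using main error by (simp add: right_diff_distrib)
  next
    case 3
    have "1 < \<bar>u * x\<bar>"
      using large mult_left_mono[OF 3, of "\<bar>u\<bar>"] by (simp add: abs_mult)
    then have "indicator {-1..1} (u * x) = (0 :: real)"
      by (auto simp: indicator_def)
    moreover have "0 \<le> (1 - cos (u * x)) * h x"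
      using nonneg by simp
    ultimately show ?thesis
      using tail_nonneg by simp
  qed
qed

lemma integrable_dilated_kernel:
  fixes k g :: "real \<Rightarrow> real"
  assumes [measurable]: "k \<in> borel_measurable borel" "g \<in> borel_measurable borel"
    and moment: "integrable lborel (\<lambda>x. min (x\<^sup>2) \<bar>x\<bar> * g x)"
    and kernel: "\<And>y. \<bar>k y\<bar> \<le> K * min (y\<^sup>2) \<bar>y\<bar>"
  shows "integrable lborel (\<lambda>x. k (u * x) * g x)"
proof (rule Bochner_Integration.integrable_bound)
  have K: "0 \<le> K"
    using kernel[of 1] abs_ge_zero[of "k 1"] by simp
  show "integrable lborel (\<lambda>x. K * (u\<^sup>2 + \<bar>u\<bar>) * \<bar>min (x\<^sup>2) \<bar>x\<bar> * g x\<bar>)"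
    using integrable_abs[OF moment] by simp
  show "(\<lambda>x. k (u * x) * g x) \<in> borel_measurable lborel"
    by measurable
  show "AE x in lborel. norm (k (u * x) * g x) \<le> norm (K * (u\<^sup>2 + \<bar>u\<bar>) * \<bar>min (x\<^sup>2) \<bar>x\<bar> * g x\<bar>)"
  proof (rule AE_I2)
    fix x
    have "\<bar>k (u * x)\<bar> \<le> K * ((u\<^sup>2 + \<bar>u\<bar>) * min (x\<^sup>2) \<bar>x\<bar>)"
      using kernel[of "u * x"] mult_left_mono[OF min_sq_abs_dilation_le[of u x] K] by linarith
    then have "\<bar>k (u * x)\<bar> * \<bar>g x\<bar> \<le> K * ((u\<^sup>2 + \<bar>u\<bar>) * min (x\<^sup>2) \<bar>x\<bar>) * \<bar>g x\<bar>"
      by (rule mult_right_mono) simp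
    then show "norm (k (u * x) * g x) \<le> norm (K * (u\<^sup>2 + \<bar>u\<bar>) * \<bar>min (x\<^sup>2) \<bar>x\<bar> * g x\<bar>)"
      using K by (simp add: abs_mult mult.assoc)
  qed
qed

lemma A_dens_eq:
  fixes g :: "real \<Rightarrow> real"
  assumes cos: "integrable lborel (\<lambda>x. (1 - cos (u * x)) * g x)"
    and sin: "integrable lborel (\<lambda>x. (sin (u * x) - u * x) * g x)"
  shows "A_dens g u = complex_of_real (LINT x|lborel. (1 - cos (u * x)) * g x)
                      + \<i> * complex_of_real (LINT x|lborel. (sin (u * x) - u * x) * g x)"
proof -
  let ?C = "\<lambda>x. complex_of_real ((1 - cos (u * x)) * g x)"
  let ?S = "\<lambda>x. \<i> * complex_of_real ((sin (u * x) - u * x) * g x)"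
  have integrand: "(exp (- \<i> * complex_of_real (u * x)) - 1 + \<i> * complex_of_real (u * x))
      * complex_of_real (g x) = - (?C x + ?S x)" for x
    by (simp add: complex_eq_iff Re_exp Im_exp algebra_simps)
  have "A_dens g u = - (LINT x|lborel. - (?C x + ?S x))"
    unfolding A_dens_def integrand ..
  also have "\<dots> = (LINT x|lborel. ?C x + ?S x)"
    by (simp only: integral_minus minus_minus)
  also have "\<dots> = (LINT x|lborel. ?C x) + (LINT x|lborel. ?S x)"
    using cos sin by (intro Bochner_Integration.integral_add integrable_mult_right integrable_of_real)
  finally show ?thesis
    by (simp only: integral_complex_of_real integral_mult_right_zero)
qed

lemma
  fixes \<phi> f :: "real \<Rightarrow> real"
  assumes int: "integrable lborel (\<lambda>x. \<phi> x * f x)"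
    and int_reflected: "integrable lborel (\<lambda>x. \<phi> (- x) * f x)"
  shows integrable_f_s: "integrable lborel (\<lambda>x. \<phi> x * f_s f x)"
    and integrable_f_as: "integrable lborel (\<lambda>x. \<phi> x * f_as f x)"
    and integral_f_s: "(LINT x|lborel. \<phi> x * f_s f x)
                        = ((LINT x|lborel. \<phi> x * f x) + (LINT x|lborel. \<phi> (- x) * f x)) / 2"
    and integral_f_as: "(LINT x|lborel. \<phi> x * f_as f x)
                        = ((LINT x|lborel. \<phi> x * f x) - (LINT x|lborel. \<phi> (- x) * f x)) / 2"
proof -
  have int': "integrable lborel (\<lambda>x. \<phi> x * f (- x))"
    using integrable_lborel_reflect[OF int_reflected] by simp
  have s: "\<phi> x * f_s f x = (\<phi> x * f x + \<phi> x * f (- x)) / 2"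
   and as: "\<phi> x * f_as f x = (\<phi> x * f x - \<phi> x * f (- x)) / 2" for x
    by (simp_all add: f_s_def f_as_def algebra_simps)
  show "integrable lborel (\<lambda>x. \<phi> x * f_s f x)" "integrable lborel (\<lambda>x. \<phi> x * f_as f x)"
    unfolding s as using int int' by simp_all
  show "(LINT x|lborel. \<phi> x * f_s f x)
          = ((LINT x|lborel. \<phi> x * f x) + (LINT x|lborel. \<phi> (- x) * f x)) / 2"
       "(LINT x|lborel. \<phi> x * f_as f x)
          = ((LINT x|lborel. \<phi> x * f x) - (LINT x|lborel. \<phi> (- x) * f x)) / 2"
    unfolding s as using int int' by (simp_all add: integral_lborel_reflect)
qed

context
  fixes f :: "real \<Rightarrow> real"
  assumes levy: "special_levy_density f"
begin

lemma levy_measurable [measurable]: "f \<in> borel_measurable borel"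
  and levy_nonneg: "0 \<le> f x"
  and levy_moment: "integrable lborel (\<lambda>x. min (x\<^sup>2) \<bar>x\<bar> * f x)"
  using levy unfolding special_levy_density_def by auto

lemma f_as_measurable [measurable]: "f_as f \<in> borel_measurable borel"
  unfolding f_as_def[abs_def] by measurable

lemma f_s_nonneg: "0 \<le> f_s f x"
  using levy_nonneg[of x] levy_nonneg[of "- x"] by (simp add: f_s_def)

lemma
  shows f_s_moment: "integrable lborel (\<lambda>x. min (x\<^sup>2) \<bar>x\<bar> * f_s f x)"
    and f_as_moment: "integrable lborel (\<lambda>x. min (x\<^sup>2) \<bar>x\<bar> * f_as f x)"
  using integrable_f_s[OF levy_moment] integrable_f_as[OF levy_moment] levy_moment by simp_all

lemma
  fixes k :: "real \<Rightarrow> real"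
  assumes [measurable]: "k \<in> borel_measurable borel"
    and kernel: "\<And>y. \<bar>k y\<bar> \<le> K * min (y\<^sup>2) \<bar>y\<bar>"
  shows levy_kernel_integrable: "integrable lborel (\<lambda>x. k (u * x) * f x)"
    and levy_kernel_integrable_f_s: "integrable lborel (\<lambda>x. k (u * x) * f_s f x)"
    and levy_kernel_integrable_f_as: "integrable lborel (\<lambda>x. k (u * x) * f_as f x)"
    and levy_kernel_integral_f_s: "(LINT x|lborel. k (u * x) * f_s f x)
          = ((LINT x|lborel. k (u * x) * f x) + (LINT x|lborel. k (- u * x) * f x)) / 2"
    and levy_kernel_integral_f_as: "(LINT x|lborel. k (u * x) * f_as f x)
          = ((LINT x|lborel. k (u * x) * f x) - (LINT x|lborel. k (- u * x) * f x)) / 2"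
proof -
  have int: "integrable lborel (\<lambda>x. k (v * x) * f x)" for v
    using integrable_dilated_kernel[OF assms(1) levy_measurable levy_moment kernel] .
  show "integrable lborel (\<lambda>x. k (u * x) * f x)"
    by (rule int)
  show "integrable lborel (\<lambda>x. k (u * x) * f_s f x)" "integrable lborel (\<lambda>x. k (u * x) * f_as f x)"
    using integrable_f_s[OF int] integrable_f_as[OF int] int[of "- u"] by simp_all
  show "(LINT x|lborel. k (u * x) * f_s f x)
          = ((LINT x|lborel. k (u * x) * f x) + (LINT x|lborel. k (- u * x) * f x)) / 2"
       "(LINT x|lborel. k (u * x) * f_as f x)
          = ((LINT x|lborel. k (u * x) * f x) - (LINT x|lborel. k (- u * x) * f x)) / 2"
    using integral_f_s[OF int] integral_f_as[OF int] int[of "- u"] by simp_all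
qed

lemma
  shows Re_A_dens: "Re (A_dens f u) = (LINT x|lborel. (1 - cos (u * x)) * f_s f x)"
    and Im_A_dens: "Im (A_dens f u) = (LINT x|lborel. (sin (u * x) - u * x) * f_as f x)"
    and A_dens_f_s: "A_dens (f_s f) u = complex_of_real (Re (A_dens f u))"
    and A_dens_f_as: "A_dens (f_as f) u = \<i> * complex_of_real (Im (A_dens f u))"
    and Im_A_dens_f: "Im (A_dens f u) = (LINT x|lborel. (sin (u * x) - u * x) * f x)"
proof -
  let ?c = "\<lambda>y::real. 1 - cos y" and ?s = "\<lambda>y::real. sin y - y"
  have c: "?c \<in> borel_measurable borel" "\<bar>?c y\<bar> \<le> 2 * min (y\<^sup>2) \<bar>y\<bar>"
   and s: "?s \<in> borel_measurable borel" "\<bar>?s y\<bar> \<le> 2 * min (y\<^sup>2) \<bar>y\<bar>" for y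
    using one_minus_cos_le_min_sq_abs[of y] abs_sin_minus_le_min_sq_abs[of y] by (auto intro!: borel_measurable_continuous_onI continuous_intros)
  have "(LINT x|lborel. ?c (u * x) * f_s f x) = (LINT x|lborel. ?c (u * x) * f x)"
   and "(LINT x|lborel. ?c (u * x) * f_as f x) = 0"
    using levy_kernel_integral_f_s[OF c] levy_kernel_integral_f_as[OF c] by simp_all
  moreover have "(LINT x|lborel. ?s (u * x) * f_as f x) = (LINT x|lborel. ?s (u * x) * f x)"
   and "(LINT x|lborel. ?s (u * x) * f_s f x) = 0"
  proof -
    have odd: "(LINT x|lborel. ?s (- u * x) * f x) = - (LINT x|lborel. ?s (u * x) * f x)"
      unfolding integral_minus[symmetric] by (rule arg_cong[where f = "integral\<^sup>L lborel"]) (simp add: fun_eq_iff algebra_simps)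
    show "(LINT x|lborel. ?s (u * x) * f_as f x) = (LINT x|lborel. ?s (u * x) * f x)"
      "(LINT x|lborel. ?s (u * x) * f_s f x) = 0"
      using levy_kernel_integral_f_s[OF s, of u] levy_kernel_integral_f_as[OF s, of u]
      unfolding odd by simp_all
  qed
  moreover note A_dens_eq[OF levy_kernel_integrable[OF c] levy_kernel_integrable[OF s]]
    A_dens_eq[OF levy_kernel_integrable_f_s[OF c] levy_kernel_integrable_f_s[OF s]]
    A_dens_eq[OF levy_kernel_integrable_f_as[OF c] levy_kernel_integrable_f_as[OF s]]
  ultimately show "Re (A_dens f u) = (LINT x|lborel. (1 - cos (u * x)) * f_s f x)"
    "Im (A_dens f u) = (LINT x|lborel. (sin (u * x) - u * x) * f_as f x)"
    "A_dens (f_s f) u = complex_of_real (Re (A_dens f u))"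
    "A_dens (f_as f) u = \<i> * complex_of_real (Im (A_dens f u))"
    "Im (A_dens f u) = (LINT x|lborel. (sin (u * x) - u * x) * f x)"
    by simp_all
qed

lemma Re_A_dens_nonneg: "0 \<le> Re (A_dens f u)"
  unfolding Re_A_dens using f_s_nonneg
  by (intro Bochner_Integration.integral_nonneg) simp

lemma Re_A_dens_upper_bound:
  assumes Y: "0 < Y" "Y < 2"
    and O: "f_s f \<in> O[at 0](\<lambda>x. \<bar>x\<bar> powr - (1 + Y))"
  shows "\<exists>C\<ge>0. \<forall>u. Re (A_dens f u) \<le> C * (1 + \<bar>u\<bar> powr Y)"
proof -
  obtain c e where c: "0 < c" and e: "0 < e" "e \<le> 1"
    and near: "\<And>x. x \<noteq> 0 \<Longrightarrow> \<bar>x\<bar> < e \<Longrightarrow> \<bar>f_s f x\<bar> \<le> c * \<bar>x\<bar> powr - (1 + Y)"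
    using bigo_at_0_powrE[OF O] by blast
  define I where "I = (LINT y|lborel. split_powr (2 - (1 + Y)) (0 - (1 + Y)) y)"
  define M where "M = (LINT x|lborel. min (x\<^sup>2) \<bar>x\<bar> * f_s f x)"
  define C where "C = c * 2 * I + 2 / e\<^sup>2 * M"
  have "0 \<le> I" "0 \<le> M"
    unfolding I_def M_def using split_powr_nonneg f_s_nonneg
    by (auto intro!: Bochner_Integration.integral_nonneg)
  then have "0 \<le> C"
    unfolding C_def using c by simp
  moreover have "Re (A_dens f u) \<le> C * (1 + \<bar>u\<bar> powr Y)" for u
  proof -
    let ?k = "\<lambda>y::real. 1 - cos y"
    have far: "\<bar>?k (u * x) * f_s f x\<bar> \<le> 2 / e\<^sup>2 * (min (x\<^sup>2) \<bar>x\<bar> * f_s f x)" if "e \<le> \<bar>x\<bar>" for x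
      using that e f_s_nonneg by (rule abs_one_minus_cos_mult_le_far)
    have "Re (A_dens f u) = \<bar>LINT x|lborel. ?k (u * x) * f_s f x\<bar>"
      using Re_A_dens Re_A_dens_nonneg by simp
    also have "\<dots> \<le> c * 2 * I * \<bar>u\<bar> powr Y + (LINT x|lborel. 2 / e\<^sup>2 * (min (x\<^sup>2) \<bar>x\<bar> * f_s f x))"
      unfolding I_def
    proof (rule abs_integral_dilated_kernel_le[where s = 2 and t = 0])
      show "integrable lborel (\<lambda>x. ?k (u * x) * f_s f x)"
        using one_minus_cos_le_min_sq_abs by (intro levy_kernel_integrable_f_s) auto
      show "integrable lborel (\<lambda>x. 2 / e\<^sup>2 * (min (x\<^sup>2) \<bar>x\<bar> * f_s f x))"
        using f_s_moment by simp
    qed (use Y near c far f_s_nonneg abs_one_minus_cos_le_powr in auto)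
    also have "\<dots> = c * 2 * I * \<bar>u\<bar> powr Y + 2 / e\<^sup>2 * M"
      unfolding M_def by simp
    also have "\<dots> \<le> C * (1 + \<bar>u\<bar> powr Y)"
      unfolding C_def using \<open>0 \<le> I\<close> \<open>0 \<le> M\<close> c by (intro add_le_sum_mult_one_plus) auto
    finally show ?thesis .
  qed
  ultimately show ?thesis
    by blast
qed

lemma integrable_first_moment_f_as:
  assumes "Y < 1" and O: "f_as f \<in> O[at 0](\<lambda>x. \<bar>x\<bar> powr - (1 + Y))"
  shows "integrable lborel (\<lambda>x. \<bar>x\<bar> * \<bar>f_as f x\<bar>)"
proof -
  obtain c e where c: "0 < c" and e: "0 < e" "e \<le> 1"
    and near: "\<And>x. x \<noteq> 0 \<Longrightarrow> \<bar>x\<bar> < e \<Longrightarrow> \<bar>f_as f x\<bar> \<le> c * \<bar>x\<bar> powr - (1 + Y)"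
    using bigo_at_0_powrE[OF O] by blast
  show ?thesis
  proof (rule Bochner_Integration.integrable_bound)
    show "integrable lborel (\<lambda>x. c * split_powr (- Y) (- 2) x + 1 / e * \<bar>min (x\<^sup>2) \<bar>x\<bar> * f_as f x\<bar>)"
      using integrable_split_powr[of "- Y" "- 2"] \<open>Y < 1\<close> integrable_abs[OF f_as_moment] by simp
    show "AE x in lborel. norm (\<bar>x\<bar> * \<bar>f_as f x\<bar>)
            \<le> norm (c * split_powr (- Y) (- 2) x + 1 / e * \<bar>min (x\<^sup>2) \<bar>x\<bar> * f_as f x\<bar>)"
    proof (rule AE_I2)
      fix x :: real
      have nonneg: "0 \<le> c * split_powr (- Y) (- 2) x" "0 \<le> 1 / e * \<bar>min (x\<^sup>2) \<bar>x\<bar> * f_as f x\<bar>"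
        using c e split_powr_nonneg by auto
      consider "x = 0" | "x \<noteq> 0" "\<bar>x\<bar> < e" | "e \<le> \<bar>x\<bar>"
        by linarith
      then have "\<bar>x\<bar> * \<bar>f_as f x\<bar> \<le> c * split_powr (- Y) (- 2) x + 1 / e * \<bar>min (x\<^sup>2) \<bar>x\<bar> * f_as f x\<bar>"
      proof cases
        case 1
        then show ?thesis using nonneg by simp
      next
        case 2
        have "\<bar>x\<bar> * \<bar>f_as f x\<bar> \<le> \<bar>x\<bar> * (c * \<bar>x\<bar> powr - (1 + Y))"
          by (rule mult_left_mono[OF near[OF 2]]) simp
        also have "\<dots> = c * (\<bar>x\<bar> powr 1 * \<bar>x\<bar> powr - (1 + Y))"
          using 2(1) by simp
        also have "\<dots> = c * split_powr (- Y) (- 2) x"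
          unfolding split_powr_def powr_add[symmetric] using 2 e by simp
        finally show ?thesis
          using nonneg by linarith
      next
        case 3
        have "e * \<bar>x\<bar> * \<bar>f_as f x\<bar> \<le> \<bar>min (x\<^sup>2) \<bar>x\<bar> * f_as f x\<bar>"
          using mult_right_mono[OF mult_abs_le_min_sq_abs[of e x] abs_ge_zero[of "f_as f x"]] e 3
          by (simp add: abs_mult)
        then have "\<bar>x\<bar> * \<bar>f_as f x\<bar> \<le> 1 / e * \<bar>min (x\<^sup>2) \<bar>x\<bar> * f_as f x\<bar>"
          using e by (simp add: field_simps)
        then show ?thesis
          using nonneg by linarith
      qed
      then show "norm (\<bar>x\<bar> * \<bar>f_as f x\<bar>)
            \<le> norm (c * split_powr (- Y) (- 2) x + 1 / e * \<bar>min (x\<^sup>2) \<bar>x\<bar> * f_as f x\<bar>)"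
        using nonneg by simp
    qed
  qed measurable
qed

lemma Im_A_dens_le_first_moment:
  assumes "Y < 1" and O: "f_as f \<in> O[at 0](\<lambda>x. \<bar>x\<bar> powr - (1 + Y))"
  shows "\<bar>Im (A_dens f u)\<bar> \<le> 2 * (LINT x|lborel. \<bar>x\<bar> * \<bar>f_as f x\<bar>) * \<bar>u\<bar>"
proof -
  have "\<bar>Im (A_dens f u)\<bar> \<le> (LINT x|lborel. 2 * \<bar>u\<bar> * (\<bar>x\<bar> * \<bar>f_as f x\<bar>))"
    unfolding Im_A_dens
  proof (rule integral_abs_bound_integral)
    show "integrable lborel (\<lambda>x. (sin (u * x) - u * x) * f_as f x)"
      using abs_sin_minus_le_min_sq_abs by (intro levy_kernel_integrable_f_as[where k = "\<lambda>y. sin y - y"]) auto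
    show "integrable lborel (\<lambda>x. 2 * \<bar>u\<bar> * (\<bar>x\<bar> * \<bar>f_as f x\<bar>))"
      using integrable_first_moment_f_as[OF assms] by simp
  qed (rule abs_sin_minus_dilated_le)
  also have "\<dots> = 2 * \<bar>u\<bar> * (LINT x|lborel. \<bar>x\<bar> * \<bar>f_as f x\<bar>)"
    by (rule integral_mult_right_zero)
  also have "\<dots> = 2 * (LINT x|lborel. \<bar>x\<bar> * \<bar>f_as f x\<bar>) * \<bar>u\<bar>"
    by (simp only: ac_simps)
  finally show ?thesis .
qed

lemma Im_A_dens_upper_bound_gt_1:
  assumes Y: "1 < Y" "Y < 2"
    and O: "f_as f \<in> O[at 0](\<lambda>x. \<bar>x\<bar> powr - (1 + Y))"
  shows "\<exists>C\<ge>0. \<forall>u. \<bar>Im (A_dens f u)\<bar> \<le> C * (1 + \<bar>u\<bar> + \<bar>u\<bar> powr Y)"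
proof -
  obtain c e where c: "0 < c" and e: "0 < e" "e \<le> 1"
    and near: "\<And>x. x \<noteq> 0 \<Longrightarrow> \<bar>x\<bar> < e \<Longrightarrow> \<bar>f_as f x\<bar> \<le> c * \<bar>x\<bar> powr - (1 + Y)"
    using bigo_at_0_powrE[OF O] by blast
  define I where "I = (LINT y|lborel. split_powr (2 - (1 + Y)) (1 - (1 + Y)) y)"
  define M where "M = (LINT x|lborel. \<bar>min (x\<^sup>2) \<bar>x\<bar> * f_as f x\<bar>)"
  define C where "C = c * 2 * I + 2 / e * M"
  have "0 \<le> I" "0 \<le> M"
    unfolding I_def M_def using split_powr_nonneg by (auto intro!: Bochner_Integration.integral_nonneg)
  have "\<bar>Im (A_dens f u)\<bar> \<le> C * (1 + \<bar>u\<bar> + \<bar>u\<bar> powr Y)" for u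
  proof -
    let ?k = "\<lambda>y::real. sin y - y"
    have far: "\<bar>?k (u * x) * f_as f x\<bar> \<le> 2 * \<bar>u\<bar> / e * \<bar>min (x\<^sup>2) \<bar>x\<bar> * f_as f x\<bar>"
      if "e \<le> \<bar>x\<bar>" for x
      using that e by (rule abs_sin_minus_mult_le_far)
    have "\<bar>Im (A_dens f u)\<bar>
        \<le> c * 2 * I * \<bar>u\<bar> powr Y + (LINT x|lborel. 2 * \<bar>u\<bar> / e * \<bar>min (x\<^sup>2) \<bar>x\<bar> * f_as f x\<bar>)"
      unfolding Im_A_dens I_def
    proof (rule abs_integral_dilated_kernel_le[where s = 2 and t = 1])
      show "integrable lborel (\<lambda>x. ?k (u * x) * f_as f x)"
        using abs_sin_minus_le_min_sq_abs by (intro levy_kernel_integrable_f_as) auto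
      show "\<bar>?k y\<bar> \<le> 2 * \<bar>y\<bar> powr 2" if "\<bar>y\<bar> \<le> 1" for y
        using abs_sin_minus_le_min_sq_abs[of y] min_sq_abs_eq_sq[OF that] by simp
      show "\<bar>?k y\<bar> \<le> 2 * \<bar>y\<bar> powr 1" if "1 \<le> \<bar>y\<bar>" for y
        using abs_sin_minus_le_min_sq_abs[of y] min_sq_abs_eq_abs[OF that] that by simp
      show "integrable lborel (\<lambda>x. 2 * \<bar>u\<bar> / e * \<bar>min (x\<^sup>2) \<bar>x\<bar> * f_as f x\<bar>)"
        using integrable_abs[OF f_as_moment] by simp
    qed (use Y near c e far in auto)
    also have "\<dots> = c * 2 * I * \<bar>u\<bar> powr Y + 2 / e * M * \<bar>u\<bar>"
      unfolding M_def by simp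
    also have "\<dots> \<le> C * (1 + \<bar>u\<bar> + \<bar>u\<bar> powr Y)"
      unfolding C_def using \<open>0 \<le> I\<close> \<open>0 \<le> M\<close> c e by (intro add_le_sum_mult_one_plus_plus) auto
    finally show ?thesis .
  qed
  moreover have "0 \<le> C"
    unfolding C_def using \<open>0 \<le> I\<close> \<open>0 \<le> M\<close> c e by simp
  ultimately show ?thesis
    by blast
qed

lemma Im_A_dens_upper_bound:
  assumes Y: "0 < Y" "Y < 2" "Y \<noteq> 1"
    and O: "f_as f \<in> O[at 0](\<lambda>x. \<bar>x\<bar> powr - (1 + Y))"
  shows "\<exists>C\<ge>0. \<forall>u. \<bar>Im (A_dens f u)\<bar> \<le> C * (1 + \<bar>u\<bar> + \<bar>u\<bar> powr Y)"
proof (cases "Y < 1")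
  case True
  define N where "N = (LINT x|lborel. \<bar>x\<bar> * \<bar>f_as f x\<bar>)"
  have "0 \<le> N"
    unfolding N_def by (intro Bochner_Integration.integral_nonneg) simp
  moreover have "\<bar>Im (A_dens f u)\<bar> \<le> 2 * N * (1 + \<bar>u\<bar> + \<bar>u\<bar> powr Y)" for u
    using Im_A_dens_le_first_moment[OF True O, of u] mult_left_mono[of "\<bar>u\<bar>" "1 + \<bar>u\<bar> + \<bar>u\<bar> powr Y" "2 * N"]
      \<open>0 \<le> N\<close> unfolding N_def by simp
  ultimately show ?thesis
    by (intro exI[of _ "2 * N"]) auto
next
  case False
  with Y show ?thesis
    using Im_A_dens_upper_bound_gt_1[OF _ Y(2) O] by simp
qed

lemma
  assumes first_moment: "integrable lborel (\<lambda>x. \<bar>x\<bar> * f x)"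
  shows integrable_sin_f_as: "integrable lborel (\<lambda>x. sin (u * x) * f_as f x)"
    and Im_levy_symbol: "Im (levy_symbol (LINT x|lborel. x * f x) f u) = (LINT x|lborel. sin (u * x) * f_as f x)"
proof -
  have x_int: "integrable lborel (\<lambda>x. x * f x)"
    using first_moment by (rule Bochner_Integration.integrable_bound) (auto simp: abs_mult levy_nonneg)
  have sin_int: "integrable lborel (\<lambda>x. sin (v * x) * f x)" for v
  proof (rule Bochner_Integration.integrable_bound)
    show "integrable lborel (\<lambda>x. \<bar>v\<bar> * (\<bar>x\<bar> * f x))"
      using first_moment by simp
    show "AE x in lborel. norm (sin (v * x) * f x) \<le> norm (\<bar>v\<bar> * (\<bar>x\<bar> * f x))"
    proof (rule AE_I2)
      fix x
      have "\<bar>sin (v * x)\<bar> * f x \<le> \<bar>v * x\<bar> * f x"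
        by (rule mult_right_mono[OF abs_sin_x_le_abs_x levy_nonneg])
      then show "norm (sin (v * x) * f x) \<le> norm (\<bar>v\<bar> * (\<bar>x\<bar> * f x))"
        using levy_nonneg[of x] by (simp add: abs_mult mult.assoc)
    qed
  qed measurable
  have sin_int': "integrable lborel (\<lambda>x. sin (u * - x) * f x)"
    using sin_int[of "- u"] by simp
  show "integrable lborel (\<lambda>x. sin (u * x) * f_as f x)"
    using integrable_f_as[OF sin_int sin_int'] .
  have "(LINT x|lborel. sin (u * - x) * f x) = - (LINT x|lborel. sin (u * x) * f x)"
    unfolding integral_minus[symmetric] by (rule arg_cong[where f = "integral\<^sup>L lborel"]) simp
  then have "(LINT x|lborel. sin (u * x) * f_as f x) = (LINT x|lborel. sin (u * x) * f x)"
    using integral_f_as[OF sin_int sin_int'] by simp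
  moreover have "Im (A_dens f u) = (LINT x|lborel. sin (u * x) * f x) - u * (LINT x|lborel. x * f x)"
  proof -
    have "Im (A_dens f u) = (LINT x|lborel. sin (u * x) * f x - u * (x * f x))"
      unfolding Im_A_dens_f by (simp add: algebra_simps)
    then show ?thesis
      using sin_int[of u] x_int by simp
  qed
  ultimately show "Im (levy_symbol (LINT x|lborel. x * f x) f u) = (LINT x|lborel. sin (u * x) * f_as f x)"
    unfolding levy_symbol_def by simp
qed

lemma Im_levy_symbol_upper_bound:
  assumes Y: "0 < Y" "Y < 1"
    and O: "f_as f \<in> O[at 0](\<lambda>x. \<bar>x\<bar> powr - (1 + Y))"
    and first_moment: "integrable lborel (\<lambda>x. \<bar>x\<bar> * f x)"
  shows "\<exists>C\<ge>0. \<forall>u. \<bar>Im (levy_symbol (LINT x|lborel. x * f x) f u)\<bar> \<le> C * (1 + \<bar>u\<bar> powr Y)"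
proof -
  obtain c e where c: "0 < c" and e: "0 < e" "e \<le> 1"
    and near: "\<And>x. x \<noteq> 0 \<Longrightarrow> \<bar>x\<bar> < e \<Longrightarrow> \<bar>f_as f x\<bar> \<le> c * \<bar>x\<bar> powr - (1 + Y)"
    using bigo_at_0_powrE[OF O] by blast
  define I where "I = (LINT y|lborel. split_powr (1 - (1 + Y)) (0 - (1 + Y)) y)"
  define N where "N = (LINT x|lborel. \<bar>x\<bar> * \<bar>f_as f x\<bar>)"
  define C where "C = c * 1 * I + 1 / e * N"
  have N_int: "integrable lborel (\<lambda>x. \<bar>x\<bar> * \<bar>f_as f x\<bar>)"
    using integrable_first_moment_f_as[OF Y(2) O] .
  have "0 \<le> I" "0 \<le> N"
    unfolding I_def N_def using split_powr_nonneg by (auto intro!: Bochner_Integration.integral_nonneg)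
  have "\<bar>Im (levy_symbol (LINT x|lborel. x * f x) f u)\<bar> \<le> C * (1 + \<bar>u\<bar> powr Y)" for u
  proof -
    have far: "\<bar>sin (u * x) * f_as f x\<bar> \<le> 1 / e * (\<bar>x\<bar> * \<bar>f_as f x\<bar>)" if "e \<le> \<bar>x\<bar>" for x
      using that e(1) by (rule abs_sin_mult_le_far)
    have "\<bar>Im (levy_symbol (LINT x|lborel. x * f x) f u)\<bar>
        \<le> c * 1 * I * \<bar>u\<bar> powr Y + (LINT x|lborel. 1 / e * (\<bar>x\<bar> * \<bar>f_as f x\<bar>))"
      unfolding Im_levy_symbol[OF first_moment] I_def
    proof (rule abs_integral_dilated_kernel_le[where s = 1 and t = 0])
      show "\<bar>sin y\<bar> \<le> 1 * \<bar>y\<bar> powr 1" for y :: real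
        using abs_sin_x_le_abs_x[of y] by simp
      show "\<bar>sin y\<bar> \<le> 1 * \<bar>y\<bar> powr 0" if "1 \<le> \<bar>y\<bar>" for y :: real
        using that by simp
    qed (use Y near c e far N_int integrable_sin_f_as[OF first_moment] in auto)
    also have "\<dots> = c * 1 * I * \<bar>u\<bar> powr Y + 1 / e * N"
      unfolding N_def by simp
    also have "\<dots> \<le> C * (1 + \<bar>u\<bar> powr Y)"
      unfolding C_def using \<open>0 \<le> I\<close> \<open>0 \<le> N\<close> c e by (intro add_le_sum_mult_one_plus) auto
    finally show ?thesis .
  qed
  moreover have "0 \<le> C"
    unfolding C_def using \<open>0 \<le> I\<close> \<open>0 \<le> N\<close> c e by simp
  ultimately show ?thesis
    by blast
qed

lemma Re_A_dens_ge_dilated: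
  assumes large: "1 < \<bar>u\<bar> * e" and "0 < e" "0 \<le> C0" "0 \<le> K" "Y < 2" "0 < a" "a < 2"
    and near: "\<And>x. x \<noteq> 0 \<Longrightarrow> \<bar>x\<bar> < e \<Longrightarrow> C0 * \<bar>x\<bar> powr - (1 + Y) - K * \<bar>x\<bar> powr - (1 + a) \<le> f_s f x"
  shows "C0 * (LINT y|lborel. indicator {-1..1} y * \<bar>y\<bar> powr (1 - Y) / 4) * \<bar>u\<bar> powr Y
           - 2 * K * (LINT y|lborel. split_powr (2 - (1 + a)) (0 - (1 + a)) y) * \<bar>u\<bar> powr a
         \<le> Re (A_dens f u)"
proof -
  let ?\<rho> = "\<lambda>y::real. indicator {-1..1} y * \<bar>y\<bar> powr (1 - Y) / 4"
  let ?Q = "split_powr (2 - (1 + a)) (0 - (1 + a))"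
  have u: "u \<noteq> 0"
    using large by auto
  have \<rho>: "integrable lborel ?\<rho>"
    using integrable_abs_powr_unit[of "1 - Y"] \<open>Y < 2\<close> by simp
  have Q: "integrable lborel ?Q"
    using \<open>0 < a\<close> \<open>a < 2\<close> by (intro integrable_split_powr) auto
  let ?R1 = "\<lambda>x. C0 * \<bar>u\<bar> powr (1 + Y) * ?\<rho> (u * x)"
  let ?R2 = "\<lambda>x. 2 * K * \<bar>u\<bar> powr (1 + a) * ?Q (u * x)"
  have R1: "integrable lborel ?R1"
    by (rule integrable_mult_right[OF integrable_dilation[OF \<rho> u]])
  have R2: "integrable lborel ?R2"
    by (rule integrable_mult_right[OF integrable_dilation[OF Q u]])
  have "C0 * integral\<^sup>L lborel ?\<rho> * \<bar>u\<bar> powr Y - 2 * K * integral\<^sup>L lborel ?Q * \<bar>u\<bar> powr a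
      = (LINT x|lborel. ?R1 x - ?R2 x)"
    by (simp only: Bochner_Integration.integral_diff[OF R1 R2]
        integral_dilation_powr[OF \<rho> u, of C0 Y] integral_dilation_powr[OF Q u, of "2 * K" a])
  also have "\<dots> \<le> (LINT x|lborel. (1 - cos (u * x)) * f_s f x)"
  proof (rule integral_mono)
    show "integrable lborel (\<lambda>x. (1 - cos (u * x)) * f_s f x)"
      using one_minus_cos_le_min_sq_abs by (intro levy_kernel_integrable_f_s) auto
    show "?R1 x - ?R2 x \<le> (1 - cos (u * x)) * f_s f x" for x
      by (rule dilated_one_minus_cos_lower_bound[OF large \<open>0 < e\<close> \<open>0 \<le> C0\<close> \<open>0 \<le> K\<close>
            f_s_nonneg near])
  qed (use R1 R2 in simp)
  also have "\<dots> = Re (A_dens f u)"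
    by (rule Re_A_dens[symmetric])
  finally show ?thesis .
qed

lemma Re_A_dens_lower_bound:
  assumes Y: "0 < Y" "Y < 2" and "0 < C0" "0 < \<delta>"
    and decomposition: "\<And>x. x \<noteq> 0 \<Longrightarrow> f_s f x = C0 / \<bar>x\<bar> powr (1 + Y) + g x"
    and O: "g \<in> O[at 0](\<lambda>x. \<bar>x\<bar> powr - (1 + Y - \<delta>))"
  shows "\<exists>C1>0. \<exists>C2\<ge>0. \<exists>Y'. 0 < Y' \<and> Y' < Y \<and>
           (\<forall>u. C1 * \<bar>u\<bar> powr Y - C2 * (1 + \<bar>u\<bar> powr Y') \<le> Re (A_dens f u))"
proof -
  obtain K e where K: "0 < K" and e: "0 < e" "e \<le> 1"
    and g: "\<And>x. x \<noteq> 0 \<Longrightarrow> \<bar>x\<bar> < e \<Longrightarrow> \<bar>g x\<bar> \<le> K * \<bar>x\<bar> powr - (1 + Y - \<delta>)"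
    using bigo_at_0_powrE[OF O] by blast
  \<comment> \<open>Weakening the bound on \<open>g\<close> to the exponent \<open>-(1 + a)\<close> with \<open>0 < a < Y\<close> makes \<open>a\<close> the \<open>Y'\<close>.\<close>
  define a where "a = Y - min \<delta> (Y / 2)"
  have a: "0 < a" "a < Y" "Y - \<delta> \<le> a"
    using Y \<open>0 < \<delta>\<close> unfolding a_def by auto
  have near: "C0 * \<bar>x\<bar> powr - (1 + Y) - K * \<bar>x\<bar> powr - (1 + a) \<le> f_s f x"
    if "x \<noteq> 0" "\<bar>x\<bar> < e" for x
    using that decomposition g K e a(3) by (intro perturbed_powr_lower_bound) auto
  define J where "J = (LINT y|lborel. indicator {-1..1} y * \<bar>y\<bar> powr (1 - Y) / 4)"
  define I where "I = (LINT y|lborel. split_powr (2 - (1 + a)) (0 - (1 + a)) y)"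
  define C1 where "C1 = C0 * J"
  define C2 where "C2 = 2 * K * I + C1 * (1 / e) powr Y"
  have "J = 2 / (2 - Y) / 4"
    unfolding J_def using integral_abs_powr_unit[of "1 - Y"] Y by simp
  then have "0 < C1"
    unfolding C1_def using \<open>0 < C0\<close> Y by simp
  have "0 \<le> I"
    unfolding I_def using split_powr_nonneg by (auto intro!: Bochner_Integration.integral_nonneg)
  then have "0 \<le> C2"
    unfolding C2_def using K \<open>0 < C1\<close> by simp
  have "C1 * \<bar>u\<bar> powr Y - C2 * (1 + \<bar>u\<bar> powr a) \<le> Re (A_dens f u)" for u
  proof (cases "1 < \<bar>u\<bar> * e")
    case True
    have "2 * K * I * \<bar>u\<bar> powr a \<le> C2 * (1 + \<bar>u\<bar> powr a)"
      unfolding C2_def using K \<open>0 \<le> I\<close> \<open>0 < C1\<close>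
      by (intro order.trans[OF _ add_le_sum_mult_one_plus[of "2 * K * I" "C1 * (1 / e) powr Y"]]) auto
    moreover have "C1 * \<bar>u\<bar> powr Y - 2 * K * I * \<bar>u\<bar> powr a \<le> Re (A_dens f u)"
      unfolding C1_def J_def I_def
      using Re_A_dens_ge_dilated[OF True e(1) _ _ Y(2) a(1) _ near] \<open>0 < C0\<close> K a Y by simp
    ultimately show ?thesis
      by linarith
  next
    case False
    then have "\<bar>u\<bar> powr Y \<le> (1 / e) powr Y"
      using e Y by (intro powr_mono2) (auto simp: field_simps)
    then have "C1 * \<bar>u\<bar> powr Y \<le> C1 * (1 / e) powr Y"
      using \<open>0 < C1\<close> by simp
    also have "\<dots> \<le> C2"
      unfolding C2_def using K \<open>0 \<le> I\<close> by simp
    also have "\<dots> \<le> C2 * (1 + \<bar>u\<bar> powr a)"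
      using \<open>0 \<le> C2\<close> by (simp add: distrib_left)
    finally have "C1 * \<bar>u\<bar> powr Y \<le> C2 * (1 + \<bar>u\<bar> powr a)" .
    then show ?thesis
      using Re_A_dens_nonneg[of u] by linarith
  qed
  then show ?thesis
    using \<open>0 < C1\<close> \<open>0 \<le> C2\<close> a by blast
qed

end

theorem mainTheorem11:
  fixes f :: "real \<Rightarrow> real" and b Y :: real
  assumes levy: "special_levy_density f"
    and Y: "0 < Y" "Y < 2"
  shows
   "(f_s f \<in> O[at 0](\<lambda>x. \<bar>x\<bar> powr (- (1 + Y))) \<longrightarrow>
      (\<exists>C\<ge>0. \<forall>u::real. A_dens (f_s f) u = complex_of_real (Re (A_dens f u))
          \<and> 0 \<le> Re (A_dens f u) \<and> Re (A_dens f u) \<le> C * (1 + \<bar>u\<bar> powr Y)))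
  \<and> ((\<exists>C>0. \<exists>g::real \<Rightarrow> real. \<exists>\<delta>>0. (\<forall>x. x \<noteq> 0 \<longrightarrow> f_s f x = C / \<bar>x\<bar> powr (1 + Y) + g x)
          \<and> g \<in> O[at 0](\<lambda>x. \<bar>x\<bar> powr (- (1 + Y - \<delta>)))) \<longrightarrow>
      (\<exists>C1>0. \<exists>C2\<ge>0. \<exists>Y'. 0 < Y' \<and> Y' < Y \<and>
         (\<forall>u::real. A_dens (f_s f) u = complex_of_real (Re (A_dens f u))
          \<and> Re (A_dens f u) \<ge> C1 * \<bar>u\<bar> powr Y - C2 * (1 + \<bar>u\<bar> powr Y'))))
  \<and> ((f_as f \<in> O[at 0](\<lambda>x. \<bar>x\<bar> powr (- (1 + Y))) \<and> Y \<noteq> 1) \<longrightarrow>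
      (\<exists>C\<ge>0. \<exists>C1\<ge>0. \<forall>u::real. \<bar>Im (A_dens f u)\<bar> = cmod (A_dens (f_as f) u)
          \<and> cmod (A_dens (f_as f) u) \<le> C * (1 + \<bar>u\<bar> + \<bar>u\<bar> powr Y)
          \<and> C * (1 + \<bar>u\<bar> + \<bar>u\<bar> powr Y) \<le> C1 * (1 + \<bar>u\<bar> powr (max 1 Y))))
  \<and> ((Y < 1 \<and> f_as f \<in> O[at 0](\<lambda>x. \<bar>x\<bar> powr (- (1 + Y)))
        \<and> integrable lborel (\<lambda>x. \<bar>x\<bar> * f x) \<and> b = (LINT x|lborel. x * f x)) \<longrightarrow>
      (\<exists>C\<ge>0. \<forall>u::real. \<bar>Im (levy_symbol b f u)\<bar> \<le> C * (1 + \<bar>u\<bar> powr Y)))"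
  apply (intro conjI impI)
  subgoal
    using Re_A_dens_upper_bound[OF levy Y] A_dens_f_s[OF levy] Re_A_dens_nonneg[OF levy] by simp
  subgoal
    using Re_A_dens_lower_bound[OF levy Y] A_dens_f_s[OF levy] by metis
  subgoal premises hyp
  proof -
    obtain C where "0 \<le> C" and C: "\<And>u. \<bar>Im (A_dens f u)\<bar> \<le> C * (1 + \<bar>u\<bar> + \<bar>u\<bar> powr Y)"
      using Im_A_dens_upper_bound[OF levy Y] hyp by blast
    have "C * (1 + \<bar>u\<bar> + \<bar>u\<bar> powr Y) \<le> 3 * C * (1 + \<bar>u\<bar> powr max 1 Y)" for u
      using mult_left_mono[OF one_plus_plus_powr_le_powr_max[OF abs_ge_zero[of u] Y(1)] \<open>0 \<le> C\<close>]
      by (simp add: algebra_simps)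
    moreover have "cmod (A_dens (f_as f) u) = \<bar>Im (A_dens f u)\<bar>" for u
      by (simp add: A_dens_f_as[OF levy] norm_mult)
    ultimately show ?thesis
      using \<open>0 \<le> C\<close> C by (metis mult_nonneg_nonneg zero_le_numeral)
  qed
  subgoal
    using Im_levy_symbol_upper_bound[OF levy Y(1)] by blast
  done

end
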